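(* Let $\mu$ be the Cauchy distribution $d\mu(x)=\frac1\pi\frac{dx}{1+x^2}$ and $t>0$. Then for $u\in\mathbb R$, \[\frac{d\psi_{t}}{du}(u)=\frac{t+4v^2(1+v)^2}{(1+v)(t+2v^2(1+v))},\qquad v=v_{t}(u).\]
   Context: $v_t(u)=\inf\{v>0:\int\frac{d\mu(x)}{(u-x)^2+v^2}\le\frac1t\}$; $H_t(z)=z+t\int\frac{d\mu(x)}{z-x}$; $\psi_t(u)=H_t(u+iv_t(u))=u+t\int\frac{(u-x)\,d\mu(x)}{(u-x)^2+v_t(u)^2}$. *)

theory Defs
  imports "HOL-Probability.Probability"
begin

definition cauchy_measure :: "real measure" where
  "cauchy_measure = density lborel (\<lambda>x. ennreal (1 / (pi * (1 + x\<^sup>2))))"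

definition v_t :: "real measure \<Rightarrow> real \<Rightarrow> real \<Rightarrow> real" where
  "v_t \<mu> t u = Inf {v. v > 0 \<and> (\<integral>x. 1 / ((u - x)\<^sup>2 + v\<^sup>2) \<partial>\<mu>) \<le> 1 / t}"

definition psi_t :: "real measure \<Rightarrow> real \<Rightarrow> real \<Rightarrow> real" where
  "psi_t \<mu> t u = u + t * (\<integral>x. (u - x) / ((u - x)\<^sup>2 + (v_t \<mu> t u)\<^sup>2) \<partial>\<mu>)"

end

theory Submission
  imports Defs "HOL-Real_Asymp.Real_Asymp"
begin

text \<open>
  For the Cauchy distribution both integrals in the definitions of \<open>v\<^sub>t\<close> and \<open>\<psi>\<^sub>t\<close> are explicit:
  by partial fractions,
  \<open>\<integral> d\<mu>(x) / ((u - x)\<^sup>2 + v\<^sup>2) = (1 + v) / (v (u\<^sup>2 + (1 + v)\<^sup>2))\<close> and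
  \<open>\<integral> (u - x) d\<mu>(x) / ((u - x)\<^sup>2 + v\<^sup>2) = u / (u\<^sup>2 + (1 + v)\<^sup>2)\<close>.
  Hence \<open>v = v\<^sub>t(u)\<close> is the unique positive root of \<open>u\<^sup>2 = t (1 + v) / v - (1 + v)\<^sup>2\<close>, whose
  right-hand side is strictly decreasing in \<open>v\<close>, and then \<open>\<psi>\<^sub>t(u) = u (1 + 2 v) / (1 + v)\<close>.
  The inverse function rule gives \<open>dv/du\<close>; differentiating \<open>\<psi>\<^sub>t\<close> and eliminating \<open>u\<^sup>2\<close>
  yields the closed form.
\<close>

lemma one_plus_power2_pos [simp]: "0 < 1 + (x::real)\<^sup>2"
  by (simp add: add_pos_nonneg)

lemma power2_diff_plus_power2_pos [simp]: "(v::real) > 0 \<Longrightarrow> 0 < (x - u)\<^sup>2 + v\<^sup>2"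
  by (simp add: add_nonneg_pos)

lemma integral_lborel_FTC:
  fixes f F :: "real \<Rightarrow> real"
  assumes "\<And>x. (F has_real_derivative f x) (at x)" "\<And>x. isCont f x" "integrable lborel f"
    "(F \<longlongrightarrow> A) at_bot" "(F \<longlongrightarrow> B) at_top"
  shows "integral\<^sup>L lborel f = B - A"
proof -
  have "(LBINT x=-\<infinity>..\<infinity>. f x) = B - A"
    by (rule interval_integral_FTC_integrable[where F=F])
      (use assms in \<open>auto simp: ereal_tendsto_simps set_integrable_def
        has_real_derivative_iff_has_vector_derivative\<close>)
  then show ?thesis
    by (simp add: interval_lebesgue_integral_def set_lebesgue_integral_def)
qed

lemma integral_lborel_odd:
  fixes f :: "real \<Rightarrow> real"
  assumes "\<And>x. f (- x) = - f x"
  shows "integral\<^sup>L lborel f = 0"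
proof -
  have "integral\<^sup>L lborel f = integral\<^sup>L lborel (\<lambda>x. f (- x))"
    using lborel_integral_real_affine[of "-1" f 0] by simp
  also have "\<dots> = - integral\<^sup>L lborel f"
    by (simp add: assms)
  finally show ?thesis by simp
qed

lemma integrable_lborel_bounded_by_inverse_1_plus_square:
  fixes f :: "real \<Rightarrow> real"
  assumes "f \<in> borel_measurable lborel" "\<And>x. \<bar>f x\<bar> \<le> C / (1 + x\<^sup>2)"
  shows "integrable lborel f"
proof (rule Bochner_Integration.integrable_bound)
  show "integrable lborel (\<lambda>x. C * inverse (1 + x\<^sup>2))"
    using integrable_inverse_1_plus_square by (simp add: set_integrable_def)
  show "AE x in lborel. norm (f x) \<le> norm (C * inverse (1 + x\<^sup>2))"
    using assms(2) by (intro AE_I2) (smt (verit, best) divide_inverse norm_mult real_norm_def)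
qed (fact assms(1))

lemma has_real_derivative_ln_quadratic:
  fixes u v x :: real
  assumes "v > 0"
  shows "((\<lambda>y. ln ((y - u)\<^sup>2 + v\<^sup>2)) has_real_derivative 2 * (x - u) / ((x - u)\<^sup>2 + v\<^sup>2)) (at x)"
  using assms by (auto intro!: derivative_eq_intros add_nonneg_pos simp: power2_eq_square)

lemma has_real_derivative_arctan_affine:
  fixes u v x :: real
  assumes "v > 0"
  shows "((\<lambda>y. arctan ((y - u) / v)) has_real_derivative v / ((x - u)\<^sup>2 + v\<^sup>2)) (at x)"
proof (rule DERIV_cong)
  show "((\<lambda>y. arctan ((y - u) / v)) has_real_derivative inverse (1 + ((x - u) / v)\<^sup>2) * (1 / v)) (at x)"
    using assms by (auto intro!: derivative_eq_intros)
  show "inverse (1 + ((x - u) / v)\<^sup>2) * (1 / v) = v / ((x - u)\<^sup>2 + v\<^sup>2)"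
    using assms by (simp add: field_simps power2_eq_square)
qed

lemma integral_lborel_partial_fractions:
  fixes f :: "real \<Rightarrow> real" and u v a b c :: real
  assumes v: "v > 0" and f: "integrable lborel f"
    and f_eq: "\<And>x. f x = (a * x + b) / (1 + x\<^sup>2) + (c - a * (x - u)) / ((x - u)\<^sup>2 + v\<^sup>2)"
  shows "integral\<^sup>L lborel f = pi * (b + c / v)"
proof -
  \<comment> \<open>The logarithmic part of the primitive vanishes at \<open>\<plusminus>\<infinity>\<close>; only the arctangents contribute.\<close>
  define F where "F y = a / 2 * (ln (1 + y\<^sup>2) - ln ((y - u)\<^sup>2 + v\<^sup>2)) + b * arctan y
      + c / v * arctan ((y - u) / v)" for y
  have "(F has_real_derivative f x) (at x)" for x
  proof (rule DERIV_cong)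
    show "(F has_real_derivative a / 2 * (2 * x / (1 + x\<^sup>2) - 2 * (x - u) / ((x - u)\<^sup>2 + v\<^sup>2))
        + b * (1 / (1 + x\<^sup>2)) + c / v * (v / ((x - u)\<^sup>2 + v\<^sup>2))) (at x)"
      (is "(_ has_real_derivative ?D) _")
      unfolding F_def
      using has_real_derivative_ln_quadratic[of 1 0 x] has_real_derivative_arctan_affine[of 1 0 x]
        has_real_derivative_ln_quadratic[OF v, of u x] has_real_derivative_arctan_affine[OF v, of u x]
      by (intro DERIV_add DERIV_diff DERIV_cmult) (simp_all add: add.commute)
    show "?D = f x"
      unfolding f_eq using v by (simp add: add_divide_distrib diff_divide_distrib algebra_simps)
  qed
  moreover have "isCont f x" for x
  proof -
    have "1 + y\<^sup>2 \<noteq> 0" "(y - u)\<^sup>2 + v\<^sup>2 \<noteq> 0" for y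
      using one_plus_power2_pos[of y] power2_diff_plus_power2_pos[OF v, of y u] by linarith+
    then show ?thesis
      unfolding f_eq[abs_def] by (intro continuous_intros) simp_all
  qed
  moreover have "(F \<longlongrightarrow> - (pi * (b + c / v) / 2)) at_bot"
  proof -
    have "((\<lambda>y. ln (1 + y\<^sup>2) - ln ((y - u)\<^sup>2 + v\<^sup>2)) \<longlongrightarrow> 0) at_bot"
      unfolding filterlim_at_bot_mirror using v by real_asymp
    moreover have "((\<lambda>y. arctan ((y - u) / v)) \<longlongrightarrow> - (pi / 2)) at_bot"
      unfolding filterlim_at_bot_mirror using v by real_asymp
    ultimately have "(F \<longlongrightarrow> a / 2 * 0 + b * - (pi / 2) + c / v * - (pi / 2)) at_bot"
      unfolding F_def by (intro tendsto_add tendsto_mult_left tendsto_arctan_at_bot)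
    then show ?thesis
      by (simp add: algebra_simps add_divide_distrib)
  qed
  moreover have "(F \<longlongrightarrow> pi * (b + c / v) / 2) at_top"
  proof -
    have "((\<lambda>y. ln (1 + y\<^sup>2) - ln ((y - u)\<^sup>2 + v\<^sup>2)) \<longlongrightarrow> 0) at_top"
      using v by real_asymp
    moreover have "((\<lambda>y. arctan ((y - u) / v)) \<longlongrightarrow> pi / 2) at_top"
      using v by real_asymp
    ultimately have "(F \<longlongrightarrow> a / 2 * 0 + b * (pi / 2) + c / v * (pi / 2)) at_top"
      unfolding F_def by (intro tendsto_add tendsto_mult_left tendsto_arctan_at_top)
    then show ?thesis
      by (simp add: algebra_simps add_divide_distrib)
  qed
  ultimately have "integral\<^sup>L lborel f = pi * (b + c / v) / 2 - - (pi * (b + c / v) / 2)"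
    by (rule integral_lborel_FTC[OF _ _ f])
  then show ?thesis
    by simp
qed

lemma integrable_Poisson_kernel_product:
  fixes u v :: real
  assumes v: "v > 0"
  shows "integrable lborel (\<lambda>x. 1 / ((1 + x\<^sup>2) * ((x - u)\<^sup>2 + v\<^sup>2)))"
proof (rule integrable_lborel_bounded_by_inverse_1_plus_square)
  fix x :: real
  have "1 / ((1 + x\<^sup>2) * ((x - u)\<^sup>2 + v\<^sup>2)) \<le> 1 / ((1 + x\<^sup>2) * v\<^sup>2)"
    using v by (intro divide_left_mono mult_left_mono) auto
  then show "\<bar>1 / ((1 + x\<^sup>2) * ((x - u)\<^sup>2 + v\<^sup>2))\<bar> \<le> 1 / v\<^sup>2 / (1 + x\<^sup>2)"
    using v by (simp add: mult.commute)
qed measurable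

lemma integrable_conjugate_kernel_product:
  fixes u v :: real
  assumes v: "v > 0"
  shows "integrable lborel (\<lambda>x. (u - x) / ((1 + x\<^sup>2) * ((x - u)\<^sup>2 + v\<^sup>2)))"
proof (rule integrable_lborel_bounded_by_inverse_1_plus_square)
  fix x :: real
  have "2 * v * \<bar>u - x\<bar> \<le> (x - u)\<^sup>2 + v\<^sup>2"
    using sum_squares_bound[of v "\<bar>u - x\<bar>"] by (simp add: power2_commute)
  then have "\<bar>u - x\<bar> / ((x - u)\<^sup>2 + v\<^sup>2) \<le> 1 / (2 * v)"
    using v by (subst pos_divide_le_eq) (simp_all add: field_simps add_pos_nonneg)
  then have "\<bar>u - x\<bar> / ((x - u)\<^sup>2 + v\<^sup>2) / (1 + x\<^sup>2) \<le> 1 / (2 * v) / (1 + x\<^sup>2)"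
    by (rule divide_right_mono) simp
  then show "\<bar>(u - x) / ((1 + x\<^sup>2) * ((x - u)\<^sup>2 + v\<^sup>2))\<bar> \<le> 1 / (2 * v) / (1 + x\<^sup>2)"
    using v by (simp add: abs_divide abs_mult mult.commute)
qed measurable

lemma integral_lborel_Poisson_kernel_product:
  fixes u v :: real
  assumes v: "v > 0"
  shows "integral\<^sup>L lborel (\<lambda>x. 1 / ((1 + x\<^sup>2) * ((x - u)\<^sup>2 + v\<^sup>2)))
    = pi * (1 + v) / (v * (u\<^sup>2 + (1 + v)\<^sup>2))"
proof (cases "u = 0 \<and> v = 1")
  case True
  \<comment> \<open>Both quadratic factors equal \<open>1 + x\<^sup>2\<close>, so the partial fractions below degenerate (\<open>D = 0\<close>).\<close>
  define F where "F y = (y / (1 + y\<^sup>2) + arctan y) / 2" for y :: real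
  have "(F has_real_derivative 1 / ((1 + x\<^sup>2) * ((x - u)\<^sup>2 + v\<^sup>2))) (at x)" for x
  proof (rule DERIV_cong)
    show "(F has_real_derivative
        ((1 * (1 + x\<^sup>2) - x * (2 * x)) / ((1 + x\<^sup>2) * (1 + x\<^sup>2)) + inverse (1 + x\<^sup>2)) / 2) (at x)"
      unfolding F_def using one_plus_power2_pos[of x]
      by (intro derivative_eq_intros refl) (auto simp: power2_eq_square)
    have "((2 - w) / (w * w) + inverse w) / 2 = 1 / (w * w)" if "w \<noteq> 0" for w :: real
      using that by (simp add: field_simps)
    moreover have "1 * (1 + x\<^sup>2) - x * (2 * x) = 2 - (1 + x\<^sup>2)"
      by (simp add: power2_eq_square)
    moreover have "(x - u)\<^sup>2 + v\<^sup>2 = 1 + x\<^sup>2"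
      using True by simp
    ultimately show "((1 * (1 + x\<^sup>2) - x * (2 * x)) / ((1 + x\<^sup>2) * (1 + x\<^sup>2)) + inverse (1 + x\<^sup>2)) / 2
        = 1 / ((1 + x\<^sup>2) * ((x - u)\<^sup>2 + v\<^sup>2))"
      by (metis one_plus_power2_pos less_irrefl)
  qed
  moreover have "isCont (\<lambda>x. 1 / ((1 + x\<^sup>2) * ((x - u)\<^sup>2 + v\<^sup>2))) x" for x
    using v by (intro continuous_intros) (simp add: less_imp_neq[symmetric])
  moreover have "(F \<longlongrightarrow> - (pi / 4)) at_bot"
    unfolding F_def filterlim_at_bot_mirror by real_asymp
  moreover have "(F \<longlongrightarrow> pi / 4) at_top"
    unfolding F_def by real_asymp
  ultimately have "integral\<^sup>L lborel (\<lambda>x. 1 / ((1 + x\<^sup>2) * ((x - u)\<^sup>2 + v\<^sup>2))) = pi / 4 - - (pi / 4)"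
    by (rule integral_lborel_FTC[OF _ _ integrable_Poisson_kernel_product[OF v]])
  then show ?thesis
    using True by simp
next
  case False
  define D where "D = (u\<^sup>2 + (v - 1)\<^sup>2) * (u\<^sup>2 + (1 + v)\<^sup>2)"
  define N where "N = u\<^sup>2 + v\<^sup>2 - 1"
  define M where "M = u\<^sup>2 - v\<^sup>2 + 1"
  have E: "u\<^sup>2 + (v - 1)\<^sup>2 > 0"
    using False by (auto simp: sum_power2_gt_zero_iff)
  then have D: "D > 0"
    using v unfolding D_def by (simp add: add_nonneg_pos)
  have "1 / ((1 + x\<^sup>2) * ((x - u)\<^sup>2 + v\<^sup>2))
      = (2 * u / D * x + N / D) / (1 + x\<^sup>2) + (M / D - 2 * u / D * (x - u)) / ((x - u)\<^sup>2 + v\<^sup>2)" for x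
  proof -
    have "(2 * u * x + N) * ((x - u)\<^sup>2 + v\<^sup>2) + (M - 2 * u * (x - u)) * (1 + x\<^sup>2) = D"
      unfolding D_def N_def M_def by (simp add: algebra_simps power2_eq_square)
    moreover have "(2 * u / D * x + N / D) / P + (M / D - 2 * u / D * (x - u)) / Q
        = ((2 * u * x + N) * Q + (M - 2 * u * (x - u)) * P) / (D * (P * Q))"
      if "P \<noteq> 0" "Q \<noteq> 0" for P Q
      using that D by (simp add: field_simps)
    ultimately show ?thesis
      using v D by (simp add: less_imp_neq[symmetric])
  qed
  then have "integral\<^sup>L lborel (\<lambda>x. 1 / ((1 + x\<^sup>2) * ((x - u)\<^sup>2 + v\<^sup>2))) = pi * (N / D + M / D / v)"
    by (intro integral_lborel_partial_fractions[OF v integrable_Poisson_kernel_product[OF v]])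
  also have "\<dots> = pi * (N * v + M) / (v * D)"
    using v D by (simp add: field_simps)
  also have "N * v + M = (1 + v) * (u\<^sup>2 + (v - 1)\<^sup>2)"
    unfolding N_def M_def by (simp add: algebra_simps power2_eq_square)
  also have "pi * ((1 + v) * (u\<^sup>2 + (v - 1)\<^sup>2)) / (v * D) = pi * (1 + v) / (v * (u\<^sup>2 + (1 + v)\<^sup>2))"
    using False unfolding D_def by simp
  finally show ?thesis .
qed

lemma integral_lborel_conjugate_kernel_product:
  fixes u v :: real
  assumes v: "v > 0"
  shows "integral\<^sup>L lborel (\<lambda>x. (u - x) / ((1 + x\<^sup>2) * ((x - u)\<^sup>2 + v\<^sup>2))) = pi * u / (u\<^sup>2 + (1 + v)\<^sup>2)"
proof (cases "u = 0")
  case True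
  then show ?thesis
    by (simp add: integral_lborel_odd)
next
  case False
  define D where "D = (u\<^sup>2 + (v - 1)\<^sup>2) * (u\<^sup>2 + (1 + v)\<^sup>2)"
  define M where "M = u\<^sup>2 - v\<^sup>2 + 1"
  define K where "K = u * (u\<^sup>2 + v\<^sup>2 + 1)"
  have E: "u\<^sup>2 + (v - 1)\<^sup>2 > 0"
    using False by (auto simp: sum_power2_gt_zero_iff)
  then have D: "D > 0"
    using v unfolding D_def by (simp add: add_nonneg_pos)
  have "(u - x) / ((1 + x\<^sup>2) * ((x - u)\<^sup>2 + v\<^sup>2))
      = (M / D * x + K / D) / (1 + x\<^sup>2) + (- 2 * u * v\<^sup>2 / D - M / D * (x - u)) / ((x - u)\<^sup>2 + v\<^sup>2)" for x
  proof -
    have "(M * x + K) * ((x - u)\<^sup>2 + v\<^sup>2) + (- 2 * u * v\<^sup>2 - M * (x - u)) * (1 + x\<^sup>2) = D * (u - x)"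
      unfolding D_def K_def M_def by (simp add: algebra_simps power2_eq_square)
    moreover have "(M / D * x + K / D) / P + (- 2 * u * v\<^sup>2 / D - M / D * (x - u)) / Q
        = ((M * x + K) * Q + (- 2 * u * v\<^sup>2 - M * (x - u)) * P) / (D * (P * Q))"
      if "P \<noteq> 0" "Q \<noteq> 0" for P Q
      using that D by (simp add: field_simps)
    ultimately show ?thesis
      using v D by (simp add: less_imp_neq[symmetric])
  qed
  then have "integral\<^sup>L lborel (\<lambda>x. (u - x) / ((1 + x\<^sup>2) * ((x - u)\<^sup>2 + v\<^sup>2)))
      = pi * (K / D + - 2 * u * v\<^sup>2 / D / v)"
    by (intro integral_lborel_partial_fractions[OF v integrable_conjugate_kernel_product[OF v]])
  also have "\<dots> = pi * (K - 2 * u * v) / D"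
    using v D by (simp add: field_simps power2_eq_square)
  also have "K - 2 * u * v = u * (u\<^sup>2 + (v - 1)\<^sup>2)"
    unfolding K_def by (simp add: algebra_simps power2_eq_square)
  also have "pi * (u * (u\<^sup>2 + (v - 1)\<^sup>2)) / D = pi * u / (u\<^sup>2 + (1 + v)\<^sup>2)"
    using False unfolding D_def by simp
  finally show ?thesis .
qed

lemma integral_cauchy_measure:
  fixes f :: "real \<Rightarrow> real"
  assumes "f \<in> borel_measurable lborel"
  shows "integral\<^sup>L cauchy_measure f = integral\<^sup>L lborel (\<lambda>x. 1 / (pi * (1 + x\<^sup>2)) * f x)"
proof -
  have "(\<lambda>x. 1 / (pi * (1 + x\<^sup>2))) \<in> borel_measurable lborel" "AE x in lborel. 0 \<le> 1 / (pi * (1 + x\<^sup>2))"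
    by (auto intro: less_imp_le)
  then show ?thesis
    unfolding cauchy_measure_def using integral_density[OF assms] by simp
qed

lemma integral_cauchy_measure_Poisson_kernel:
  fixes u v :: real
  assumes "v > 0"
  shows "(\<integral>x. 1 / ((u - x)\<^sup>2 + v\<^sup>2) \<partial>cauchy_measure) = (1 + v) / (v * (u\<^sup>2 + (1 + v)\<^sup>2))"
proof -
  have "(\<integral>x. 1 / ((u - x)\<^sup>2 + v\<^sup>2) \<partial>cauchy_measure)
      = (\<integral>x. 1 / pi * (1 / ((1 + x\<^sup>2) * ((x - u)\<^sup>2 + v\<^sup>2))) \<partial>lborel)"
    by (simp add: integral_cauchy_measure power2_commute[of u] mult.assoc)
  also have "\<dots> = 1 / pi * (pi * (1 + v) / (v * (u\<^sup>2 + (1 + v)\<^sup>2)))"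
    by (simp only: integral_mult_right_zero integral_lborel_Poisson_kernel_product[OF assms])
  finally show ?thesis
    by simp
qed

lemma integral_cauchy_measure_conjugate_kernel:
  fixes u v :: real
  assumes "v > 0"
  shows "(\<integral>x. (u - x) / ((u - x)\<^sup>2 + v\<^sup>2) \<partial>cauchy_measure) = u / (u\<^sup>2 + (1 + v)\<^sup>2)"
proof -
  have "(\<integral>x. (u - x) / ((u - x)\<^sup>2 + v\<^sup>2) \<partial>cauchy_measure)
      = (\<integral>x. 1 / pi * ((u - x) / ((1 + x\<^sup>2) * ((x - u)\<^sup>2 + v\<^sup>2))) \<partial>lborel)"
    by (simp add: integral_cauchy_measure power2_commute[of u] mult.assoc)
  also have "\<dots> = 1 / pi * (pi * u / (u\<^sup>2 + (1 + v)\<^sup>2))"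
    by (simp only: integral_mult_right_zero integral_lborel_conjugate_kernel_product[OF assms])
  finally show ?thesis
    by simp
qed

text \<open>
  Solving \<open>(1 + v) / (v (u\<^sup>2 + (1 + v)\<^sup>2)) = 1 / t\<close> for \<open>u\<^sup>2\<close>: the Cauchy value of
  \<open>v\<^sub>t(u)\<close> is the \<open>v > 0\<close> with \<open>u\<^sup>2 = u_sq_of_v t v\<close>.
\<close>

definition u_sq_of_v :: "real \<Rightarrow> real \<Rightarrow> real" where
  "u_sq_of_v t v = t * (1 + v) / v - (1 + v)\<^sup>2"

definition v_of_u_sq :: "real \<Rightarrow> real \<Rightarrow> real" where
  "v_of_u_sq t s = (THE v. v > 0 \<and> u_sq_of_v t v = s)"

lemma u_sq_of_v_eq: "v > 0 \<Longrightarrow> u_sq_of_v t v = t + t / v - (1 + v)\<^sup>2"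
  unfolding u_sq_of_v_def by (simp add: field_simps)

lemma u_sq_of_v_strict_antimono:
  assumes "t > 0" "0 < a" "a < b"
  shows "u_sq_of_v t b < u_sq_of_v t a"
proof -
  have "t / b < t / a"
    using assms by (simp add: divide_strict_left_mono)
  moreover have "(1 + a)\<^sup>2 < (1 + b)\<^sup>2"
    using assms by (simp add: power_strict_mono)
  ultimately show ?thesis
    using assms by (simp add: u_sq_of_v_eq)
qed

lemma has_real_derivative_u_sq_of_v:
  assumes "v > 0"
  shows "(u_sq_of_v t has_real_derivative - t / v\<^sup>2 - 2 * (1 + v)) (at v)"
  unfolding u_sq_of_v_def[abs_def] using assms
  by (auto intro!: derivative_eq_intros simp: field_simps power2_eq_square)

lemma u_sq_of_v_le_iff:
  assumes "t > 0" "v > 0" "w > 0"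
  shows "u_sq_of_v t v \<le> u_sq_of_v t w \<longleftrightarrow> w \<le> v"
  using assms u_sq_of_v_strict_antimono[of t v w] u_sq_of_v_strict_antimono[of t w v]
  by (cases v w rule: linorder_cases) auto

lemma u_sq_of_v_inj:
  assumes "t > 0" "v > 0" "w > 0" "u_sq_of_v t v = u_sq_of_v t w"
  shows "v = w"
  using assms u_sq_of_v_le_iff[of t v w] u_sq_of_v_le_iff[of t w v] by auto

lemma isCont_u_sq_of_v: "v > 0 \<Longrightarrow> isCont (u_sq_of_v t) v"
  using has_real_derivative_u_sq_of_v by (rule DERIV_isCont)

lemma u_sq_of_v_surj:
  assumes t: "t > 0"
  shows "\<exists>v>0. u_sq_of_v t v = s"
proof -
  define a where "a = min 1 (t / (\<bar>s\<bar> + 4))"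
  define b where "b = 1 + \<bar>s\<bar> + 2 * t"
  have a: "0 < a" "a \<le> 1" and b: "1 \<le> b"
    using t by (auto simp: a_def b_def)
  have "a \<le> t / (\<bar>s\<bar> + 4)"
    by (simp add: a_def)
  then have "\<bar>s\<bar> + 4 \<le> t / a"
    using a by (simp add: le_divide_eq mult.commute)
  moreover have "(1 + a)\<^sup>2 \<le> 2\<^sup>2"
    using a by (intro power_mono) auto
  ultimately have "s \<le> u_sq_of_v t a"
    using t a by (simp add: u_sq_of_v_eq)
  moreover have "u_sq_of_v t b \<le> s"
  proof -
    have "t / b \<le> t"
      using t b by (simp add: divide_le_eq)
    moreover have "b \<le> (1 + b)\<^sup>2"
      using b by (simp add: power2_eq_square algebra_simps)
    ultimately show ?thesis
      using b by (simp add: u_sq_of_v_eq b_def)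
  qed
  moreover have "isCont (u_sq_of_v t) x" if "a \<le> x" for x
    using that a by (simp add: isCont_u_sq_of_v)
  ultimately obtain v where "a \<le> v" "u_sq_of_v t v = s"
    using IVT2[of "u_sq_of_v t" b s a] a b by auto
  then show ?thesis
    using a(1) by (intro exI[of _ v]) auto
qed

lemma v_of_u_sq:
  assumes "t > 0"
  shows "v_of_u_sq t s > 0" "u_sq_of_v t (v_of_u_sq t s) = s"
proof -
  obtain v where v: "v > 0" "u_sq_of_v t v = s"
    using u_sq_of_v_surj[OF assms] by blast
  have "v_of_u_sq t s = v"
    unfolding v_of_u_sq_def using v u_sq_of_v_inj[OF assms] by blast
  then show "v_of_u_sq t s > 0" "u_sq_of_v t (v_of_u_sq t s) = s"
    using v by auto
qed

lemma v_of_u_sq_of_v: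
  assumes "t > 0" "v > 0"
  shows "v_of_u_sq t (u_sq_of_v t v) = v"
  using assms v_of_u_sq[OF assms(1)] u_sq_of_v_inj by blast

lemma has_real_derivative_v_of_u_sq:
  assumes t: "t > 0"
  shows "(v_of_u_sq t has_real_derivative inverse (- t / (v_of_u_sq t s)\<^sup>2 - 2 * (1 + v_of_u_sq t s))) (at s)"
proof -
  let ?v = "v_of_u_sq t s"
  have v: "?v > 0" "u_sq_of_v t ?v = s"
    using v_of_u_sq[OF t] by auto
  have pos: "z > 0" if "?v / 2 \<le> z" for z
    using that v by linarith
  have "isCont (v_of_u_sq t) (u_sq_of_v t ?v)"
    by (rule isCont_inverse_function2[where a="?v / 2" and b="2 * ?v"])
      (use v pos t in \<open>simp_all add: v_of_u_sq_of_v isCont_u_sq_of_v\<close>)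
  then have "isCont (v_of_u_sq t) s"
    using v by simp
  moreover have "- t / ?v\<^sup>2 - 2 * (1 + ?v) < 0"
  proof -
    have "0 < t / ?v\<^sup>2"
      using t v by simp
    then show ?thesis
      using v by (simp; linarith)
  qed
  ultimately show ?thesis
    using has_real_derivative_u_sq_of_v[OF v(1), of t] v_of_u_sq(2)[OF t]
    by (intro DERIV_inverse_function[where a="s - 1" and b="s + 1"]) auto
qed

lemma cauchy_measure_Poisson_integral_le_iff:
  assumes t: "t > 0" and v: "v > 0"
  shows "(\<integral>x. 1 / ((u - x)\<^sup>2 + v\<^sup>2) \<partial>cauchy_measure) \<le> 1 / t \<longleftrightarrow> u_sq_of_v t v \<le> u\<^sup>2"
proof -
  have "0 < u\<^sup>2 + (1 + v)\<^sup>2"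
    using v by (simp add: add_nonneg_pos)
  then have "(1 + v) / (v * (u\<^sup>2 + (1 + v)\<^sup>2)) \<le> 1 / t \<longleftrightarrow> t * (1 + v) \<le> v * (u\<^sup>2 + (1 + v)\<^sup>2)"
    using t v by (simp add: divide_simps mult.commute)
  also have "\<dots> \<longleftrightarrow> u_sq_of_v t v \<le> u\<^sup>2"
    unfolding u_sq_of_v_def using v by (simp add: diff_le_eq pos_divide_le_eq algebra_simps)
  finally show ?thesis
    by (simp add: integral_cauchy_measure_Poisson_kernel v)
qed

lemma v_t_cauchy_measure:
  assumes t: "t > 0"
  shows "v_t cauchy_measure t u = v_of_u_sq t (u\<^sup>2)"
proof -
  define w where "w = v_of_u_sq t (u\<^sup>2)"
  have w: "w > 0" "u_sq_of_v t w = u\<^sup>2"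
    unfolding w_def using v_of_u_sq[OF t] by auto
  have "v > 0 \<and> (\<integral>x. 1 / ((u - x)\<^sup>2 + v\<^sup>2) \<partial>cauchy_measure) \<le> 1 / t \<longleftrightarrow> w \<le> v" for v
  proof (cases "v > 0")
    case True
    then show ?thesis
      using t w by (simp add: cauchy_measure_Poisson_integral_le_iff u_sq_of_v_le_iff flip: w(2))
  next
    case False
    then show ?thesis
      using w by auto
  qed
  then have "{v. v > 0 \<and> (\<integral>x. 1 / ((u - x)\<^sup>2 + v\<^sup>2) \<partial>cauchy_measure) \<le> 1 / t} = {w..}"
    by auto
  then show ?thesis
    unfolding v_t_def w_def by simp
qed

lemma psi_t_cauchy_measure:
  assumes t: "t > 0"
  shows "psi_t cauchy_measure t u = u * ((1 + 2 * v_of_u_sq t (u\<^sup>2)) / (1 + v_of_u_sq t (u\<^sup>2)))"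
proof -
  define v where "v = v_of_u_sq t (u\<^sup>2)"
  have v: "v > 0" "u_sq_of_v t v = u\<^sup>2"
    unfolding v_def using v_of_u_sq[OF t] by auto
  then have "u\<^sup>2 + (1 + v)\<^sup>2 = t * (1 + v) / v"
    unfolding u_sq_of_v_def by simp
  then have "psi_t cauchy_measure t u = u + t * (u / (t * (1 + v) / v))"
    unfolding psi_t_def v_t_cauchy_measure[OF t] v_def[symmetric]
    by (simp add: integral_cauchy_measure_conjugate_kernel v)
  also have "\<dots> = u + u * v / (1 + v)"
    using t v by simp
  also have "\<dots> = u * ((1 + 2 * v) / (1 + v))"
    using v by (simp add: field_simps)
  finally show ?thesis
    unfolding v_def .
qed

lemma psi_t_derivative_closed_form:
  fixes t u v :: real
  assumes t: "t > 0" and v: "v > 0" and u: "u_sq_of_v t v = u\<^sup>2"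
  shows "(1 + 2 * v) / (1 + v) + u * (2 * u / (- t / v\<^sup>2 - 2 * (1 + v))) / (1 + v)\<^sup>2
    = (t + 4 * v\<^sup>2 * (1 + v)\<^sup>2) / ((1 + v) * (t + 2 * v\<^sup>2 * (1 + v)))"
proof -
  define w where "w = 1 + v"
  define K where "K = t + 2 * v\<^sup>2 * w"
  have w: "w > 0" and K: "K > 0"
    unfolding K_def w_def using t v by (simp_all add: add_pos_nonneg)
  have uw: "u\<^sup>2 * v = w * (t - v * w)"
    using u v unfolding u_sq_of_v_def w_def[symmetric] by (simp add: field_simps power2_eq_square)
  have "- t / v\<^sup>2 - 2 * w = - K / v\<^sup>2"
    unfolding K_def using v by (simp add: field_simps)
  then have "(1 + 2 * v) / w + u * (2 * u / (- t / v\<^sup>2 - 2 * w)) / w\<^sup>2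
      = (1 + 2 * v) / w + u * (2 * u / (- K / v\<^sup>2)) / w\<^sup>2"
    by simp
  also have "\<dots> = (1 + 2 * v) / w - 2 * v * (u\<^sup>2 * v) / (K * w\<^sup>2)"
    using v K w by (simp add: field_simps power2_eq_square)
  also have "\<dots> = (1 + 2 * v) / w - 2 * v * (t - v * w) / (K * w)"
    unfolding uw using w by (simp add: power2_eq_square)
  also have "\<dots> = ((1 + 2 * v) * K - 2 * v * (t - v * w)) / (w * K)"
    using w K by (simp add: field_simps)
  also have "(1 + 2 * v) * K - 2 * v * (t - v * w) = t + 4 * v\<^sup>2 * w\<^sup>2"
    unfolding K_def w_def by (simp add: algebra_simps power2_eq_square)
  finally show ?thesis
    unfolding w_def K_def .
qed

lemma has_real_derivative_psi_t_cauchy_measure: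
  fixes t u v :: real
  assumes t: "t > 0" and v: "v = v_t cauchy_measure t u"
  shows "(psi_t cauchy_measure t has_real_derivative
      (1 + 2 * v) / (1 + v) + u * (2 * u / (- t / v\<^sup>2 - 2 * (1 + v))) / (1 + v)\<^sup>2) (at u)"
proof -
  define V where "V x = v_of_u_sq t (x\<^sup>2)" for x
  define dV where "dV = 2 * u / (- t / v\<^sup>2 - 2 * (1 + v))"
  have Vu: "V u = v" "1 + V u \<noteq> 0"
    unfolding V_def v v_t_cauchy_measure[OF t] using v_of_u_sq(1)[OF t, of "u\<^sup>2"] by auto
  have "(V has_real_derivative dV) (at u)"
    unfolding dV_def V_def v v_t_cauchy_measure[OF t]
    using DERIV_chain2[OF has_real_derivative_v_of_u_sq[OF t] DERIV_power[OF DERIV_ident, of 2]]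
    by (simp add: divide_inverse mult.commute)
  then have "((\<lambda>x. x * ((1 + 2 * V x) / (1 + V x))) has_real_derivative
      1 * ((1 + 2 * V u) / (1 + V u))
      + (((0 + 2 * dV) * (1 + V u) - (1 + 2 * V u) * (0 + dV)) / ((1 + V u) * (1 + V u))) * u) (at u)"
    using Vu(2) by (intro DERIV_mult[OF DERIV_ident] DERIV_divide DERIV_add[OF DERIV_const] DERIV_cmult)
  moreover have "1 * ((1 + 2 * v) / (1 + v)) + (((0 + 2 * dV) * (1 + v) - (1 + 2 * v) * (0 + dV)) / ((1 + v) * (1 + v))) * u
      = (1 + 2 * v) / (1 + v) + u * dV / (1 + v)\<^sup>2"
    by (simp add: algebra_simps power2_eq_square)
  moreover have "psi_t cauchy_measure t = (\<lambda>x. x * ((1 + 2 * V x) / (1 + V x)))"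
    unfolding V_def by (simp add: psi_t_cauchy_measure[OF t] fun_eq_iff)
  ultimately show ?thesis
    unfolding dV_def[symmetric] Vu(1) by (simp only: DERIV_cong)
qed

theorem proposition6p4:
  fixes t u :: real
  assumes "t > 0"
  shows "((psi_t cauchy_measure t) has_real_derivative
           (let v = v_t cauchy_measure t u in
              (t + 4 * v\<^sup>2 * (1 + v)\<^sup>2) / ((1 + v) * (t + 2 * v\<^sup>2 * (1 + v)))))
         (at u)"
proof -
  define v where "v = v_t cauchy_measure t u"
  have "v > 0" "u_sq_of_v t v = u\<^sup>2"
    unfolding v_def v_t_cauchy_measure[OF assms] using v_of_u_sq[OF assms] by auto
  then show ?thesis
    using has_real_derivative_psi_t_cauchy_measure[OF assms v_def]
    unfolding psi_t_derivative_closed_form[OF assms \<open>v > 0\<close> \<open>u_sq_of_v t v = u\<^sup>2\<close>]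
    by (simp add: Let_def v_def)
qed

end
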